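(* Let $\eta>0$ be a constant and let $B\subseteq\mathbb T^d$ be a closed ball of radius $r>0$ centred at $0$ satisfying $n\,\mathrm{Vol}(B)=\Theta(r^dn)=\omega(1)$. Then with probability $1-(r^dn)^{-\Omega(\eta)}$ there is no vertex $v=(x_v,w_v)$ of the GIRG with $x_v\in\mathbb T^d\setminus B$ and $w_v\ge(\|x_v\|^dn)^{1/(\beta-1-\eta)}$.
   Context: Model (GIRG). Fix constants: $d\ge1$, $\beta\in(2,3)$, $\alpha\in(1,\infty]$, $w_{\min}>0$, a distribution $\mathcal D$ on $\mathbb R_{>0}$. Asymptotics refer to $n\to\infty$, with constants in $\Omega(\eta)$ depending only on model parameters. Ground space: torus $\mathbb T^d=\mathbb R^d/\mathbb Z^d$ with $\|x-y\|=\max_i\min\{|x_i-y_i|,1-|x_i-y_i|\}$, $\|x\|=\|x-0\|$; $\mathrm{Vol}$ = Lebesgue measure. Vertex positions: homogeneous Poisson point process of intensity $n$; independent weights $w_v\sim\mathcal D$ following a weak power law with exponent $\beta$: $\Pr[D\ge w_{\min}]=1$ and for every constant $\gamma>0$ there are constants $0<c_1\le c_2$ with $c_1w^{1-\beta-\gamma}\le\Pr[D\ge w]\le c_2w^{1-\beta+\gamma}$ for all $w\ge w_{\min}$. (Edges are irrelevant for this statement.) *)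

theory Defs
  imports "HOL-Probability.Probability" "HOL-Library.Landau_Symbols"
begin

text \<open>The torus T^d = R^d / Z^d, represented by the fundamental domain [0,1)^d.\<close>
definition torus :: "(real^'d) set" where
  "torus = {x. \<forall>i. 0 \<le> x $ i \<and> x $ i < 1}"

definition torus_norm :: "(real^'d) \<Rightarrow> real" where
  "torus_norm x = Max (range (\<lambda>i. min \<bar>x $ i\<bar> (1 - \<bar>x $ i\<bar>)))"

definition torus_ball :: "real \<Rightarrow> (real^'d) set" where
  "torus_ball r = {x \<in> torus. torus_norm x \<le> r}"

text \<open>Poisson probability P[Po(mu) = k] (valid also for mu = 0).\<close>
definition poisson_prob :: "real \<Rightarrow> nat \<Rightarrow> real" where
  "poisson_prob mu k = mu ^ k / fact k * exp (- mu)"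

definition girg_intensity :: "real \<Rightarrow> real measure \<Rightarrow> ((real^'d) \<times> real) set \<Rightarrow> real" where
  "girg_intensity n D A = n * measure (lborel \<Otimes>\<^sub>M D) (A \<inter> (torus \<times> UNIV))"

text \<open>V is the (random) vertex set of a GIRG: a Poisson point process on the torus with
  intensity n whose points carry independent weights with law D, i.e. a Poisson point process
  on T^d x R with intensity measure n Vol x D.\<close>
definition girg_vertices ::
  "'a measure \<Rightarrow> ('a \<Rightarrow> ((real^'d) \<times> real) set) \<Rightarrow> real \<Rightarrow> real measure \<Rightarrow> bool" where
  "girg_vertices M V n D \<longleftrightarrow>
     prob_space M \<and>
     (\<forall>\<omega>\<in>space M. finite (V \<omega>) \<and> V \<omega> \<subseteq> torus \<times> UNIV) \<and>
     (\<forall>(I :: nat set) A. finite I \<longrightarrow> (\<forall>i\<in>I. A i \<in> sets (lborel \<Otimes>\<^sub>M D)) \<longrightarrow>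
        disjoint_family_on A I \<longrightarrow>
        prob_space.indep_vars M (\<lambda>_. count_space UNIV) (\<lambda>i \<omega>. card (V \<omega> \<inter> A i)) I \<and>
        (\<forall>i\<in>I. \<forall>k. measure M {\<omega> \<in> space M. card (V \<omega> \<inter> A i) = k}
                     = poisson_prob (girg_intensity n D (A i)) k))"

definition weak_power_law :: "real measure \<Rightarrow> real \<Rightarrow> real \<Rightarrow> bool" where
  "weak_power_law D \<beta> wmin \<longleftrightarrow>
     prob_space D \<and> sets D = sets borel \<and> measure D {wmin..} = 1 \<and>
     (\<forall>\<gamma>>0. \<exists>c1 c2. 0 < c1 \<and> c1 \<le> c2 \<and>
        (\<forall>w\<ge>wmin. c1 * w powr (1 - \<beta> - \<gamma>) \<le> measure D {w..} \<and>
                   measure D {w..} \<le> c2 * w powr (1 - \<beta> + \<gamma>)))"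

end

theory Submission
  imports Defs "HOL-Real_Asymp.Real_Asymp"
begin

text \<open>
  A vertex at torus distance \<open>\<rho> > r\<close> from 0 is bad when its weight is at least
  \<open>(\<rho>^d n)^(1/e)\<close>, where \<open>e = \<beta> - 1 - \<eta>\<close>. Split the positions into the dyadic shells
  \<open>r 2^k < \<rho> \<le> r 2^(k+1)\<close>. The weak power law with slack \<open>\<eta>/2\<close> gives
  \<open>Pr[D \<ge> w] \<le> c w^(-p)\<close> with \<open>p = e + \<eta>/2\<close>, so the expected number of bad vertices in shell \<open>k\<close>
  is at most \<open>4^d c (r^d n)^(1 - p/e) q^k\<close> with \<open>q = 2^(d (1 - p/e)) < 1\<close>. The geometric series
  is dominated by its first term, and \<open>1 - p/e = -\<eta>/(2e) \<le> -\<eta>/4\<close> because \<open>e < 2\<close>.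
  A Poisson process meets a set with probability at most its intensity, and
  \<open>C (r^d n)^(-\<eta>/4) \<le> (r^d n)^(-\<eta>/8)\<close> once \<open>r^d n\<close> is large.
\<close>

lemma torus_in_borel [measurable]: "torus \<in> sets (borel :: (real^'d) measure)"
  unfolding torus_def by measurable

lemma borel_measurable_torus_norm [measurable]:
  "torus_norm \<in> borel_measurable (borel :: (real^'d) measure)"
  unfolding torus_norm_def by measurable

lemma torus_ball_in_borel [measurable]: "torus_ball R \<in> sets (borel :: (real^'d) measure)"
  unfolding torus_ball_def by measurable

lemma torus_norm_le_half: "torus_norm (x::real^'d) \<le> 1/2"
  unfolding torus_norm_def by (subst Max_le_iff) (auto simp: min_def)

lemma torus_norm_ge_coordinate: "min \<bar>x $ i\<bar> (1 - \<bar>x $ i\<bar>) \<le> torus_norm (x::real^'d)"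
  unfolding torus_norm_def by (rule Max_ge) auto

lemma emeasure_torus_ball_le:
  assumes "0 \<le> R"
  shows "emeasure lborel (torus_ball R :: (real^'d) set) \<le> ennreal ((2 * R) ^ CARD('d))"
proof -
  \<comment> \<open>In each coordinate the ball lies within \<open>R\<close> of 0 or of 1: cover it by \<open>2^d\<close> corner cubes.\<close>
  define corner :: "('d \<Rightarrow> bool) \<Rightarrow> (real^'d) set" where
    "corner b = cbox (\<chi> i. if b i then 0 else 1 - R) (\<chi> i. if b i then R else 1)" for b
  have cover: "torus_ball R \<subseteq> (\<Union>b. corner b)"
  proof
    fix x :: "real^'d" assume x: "x \<in> torus_ball R"
    have "x \<in> corner (\<lambda>i. x $ i \<le> R)"
      unfolding corner_def mem_box_cart vec_lambda_beta
    proof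
      fix i
      have "min \<bar>x $ i\<bar> (1 - \<bar>x $ i\<bar>) \<le> R" "0 \<le> x $ i" "x $ i < 1"
        using torus_norm_ge_coordinate[of x i] x by (auto simp: torus_ball_def torus_def)
      then show "(if x $ i \<le> R then 0 else 1 - R) \<le> x $ i \<and> x $ i \<le> (if x $ i \<le> R then R else 1)"
        by (auto simp: min_def split: if_splits)
    qed
    then show "x \<in> (\<Union>b. corner b)" by blast
  qed
  have corner_volume: "emeasure lborel (corner b) = ennreal (R ^ CARD('d))" for b
  proof -
    have "corner b \<noteq> {}"
      using assms by (auto simp: corner_def interval_ne_empty_cart)
    moreover have "(if b i then R else 1) - (if b i then 0 else 1 - R) = R" for i
      by simp
    ultimately have "measure lborel (corner b) = R ^ CARD('d)"
      unfolding corner_def by (simp add: content_cbox_cart)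
    then show ?thesis
      unfolding corner_def
      by (simp add: emeasure_eq_measure2)
  qed
  have "emeasure lborel (torus_ball R :: (real^'d) set) \<le> emeasure lborel (\<Union>b. corner b)"
    by (rule emeasure_mono[OF cover]) (auto simp: corner_def)
  also have "\<dots> \<le> (\<Sum>b\<in>UNIV. emeasure lborel (corner b))"
    by (rule emeasure_subadditive_finite) (auto simp: corner_def)
  also have "\<dots> = ennreal ((2 * R) ^ CARD('d))"
    using assms by (simp add: corner_volume card_fun power_mult_distrib ennreal_of_nat_eq_real_of_nat ennreal_mult)
  finally show ?thesis .
qed

lemma filterlim_at_top_of_bigo:
  fixes f g :: "'a \<Rightarrow> real"
  assumes "f \<in> O[F](g)" and "filterlim f at_top F" and "\<forall>\<^sub>F x in F. 0 \<le> g x"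
  shows "filterlim g at_top F"
proof -
  obtain C where C: "0 < C" and bound: "\<forall>\<^sub>F x in F. norm (f x) \<le> C * norm (g x)"
    using assms(1) by (elim landau_o.bigE)
  show ?thesis
    unfolding filterlim_at_top
  proof
    fix Z :: real
    have "\<forall>\<^sub>F x in F. C * Z \<le> f x"
      using assms(2) by (simp add: filterlim_at_top)
    with bound assms(3) show "\<forall>\<^sub>F x in F. Z \<le> g x"
    proof eventually_elim
      case (elim x)
      then have "C * Z \<le> C * g x" by simp
      with C show ?case by simp
    qed
  qed
qed

lemma measure_le_sum_of_cover:
  fixes t :: "'i \<Rightarrow> real"
  assumes "A \<in> sets M" and "finite I" and "A \<subseteq> (\<Union>i\<in>I. B i)"
    and "\<And>i. i \<in> I \<Longrightarrow> B i \<in> sets M"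
    and "\<And>i. i \<in> I \<Longrightarrow> emeasure M (B i) \<le> ennreal (t i)"
    and "\<And>i. i \<in> I \<Longrightarrow> 0 \<le> t i"
  shows "measure M A \<le> (\<Sum>i\<in>I. t i)"
proof -
  have "emeasure M A \<le> emeasure M (\<Union>i\<in>I. B i)"
    using assms(2-4) by (intro emeasure_mono) auto
  also have "\<dots> \<le> (\<Sum>i\<in>I. emeasure M (B i))"
    using assms(2,4) by (intro emeasure_subadditive_finite) auto
  also have "\<dots> \<le> (\<Sum>i\<in>I. ennreal (t i))"
    using assms(5) by (rule sum_mono)
  also have "\<dots> = ennreal (\<Sum>i\<in>I. t i)"
    using assms(6) by simp
  finally show ?thesis
    unfolding measure_def using assms(6) by (intro enn2real_leI sum_nonneg) auto
qed

lemma dyadic_scale_exists: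
  fixes r t :: real
  assumes "r < t" and "t \<le> r * 2 ^ N"
  shows "\<exists>k<N. r * 2 ^ k < t \<and> t \<le> r * 2 ^ Suc k"
  using assms(2)
proof (induction N)
  case 0
  with assms(1) show ?case by simp
next
  case (Suc N)
  show ?case
  proof (cases "t \<le> r * 2 ^ N")
    case True
    with Suc.IH show ?thesis using less_SucI by blast
  next
    case False
    with Suc.prems show ?thesis by auto
  qed
qed

lemma girg_vertices_meet_prob_le:
  assumes "girg_vertices M V n D" and "A \<in> sets (lborel \<Otimes>\<^sub>M D)"
  shows "{\<omega> \<in> space M. V \<omega> \<inter> A \<noteq> {}} \<in> sets M"
    and "measure M {\<omega> \<in> space M. V \<omega> \<inter> A \<noteq> {}} \<le> girg_intensity n D A"
proof -
  interpret prob_space M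
    using assms(1) by (simp add: girg_vertices_def)
  have "indep_vars (\<lambda>_. count_space UNIV) (\<lambda>i \<omega>. card (V \<omega> \<inter> A)) {0::nat} \<and>
      (\<forall>k. measure M {\<omega> \<in> space M. card (V \<omega> \<inter> A) = k} = poisson_prob (girg_intensity n D A) k)"
    using assms unfolding girg_vertices_def
    by (auto dest!: spec[of _ "{0::nat}"] spec[of _ "\<lambda>_. A"] simp: disjoint_family_on_def)
  then have count_measurable: "(\<lambda>\<omega>. card (V \<omega> \<inter> A)) \<in> measurable M (count_space UNIV)"
    and no_hit: "prob {\<omega> \<in> space M. card (V \<omega> \<inter> A) = 0} = exp (- girg_intensity n D A)"
    by (auto simp: indep_vars_def poisson_prob_def)
  \<comment> \<open>\<open>card\<close> is also 0 on infinite sets; this uses that the vertex sets are finite.\<close>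
  have hit_eq: "{\<omega> \<in> space M. V \<omega> \<inter> A \<noteq> {}} = space M - {\<omega> \<in> space M. card (V \<omega> \<inter> A) = 0}"
    using assms(1) by (auto simp: girg_vertices_def)
  have no_hit_event: "{\<omega> \<in> space M. card (V \<omega> \<inter> A) = 0} \<in> events"
    using count_measurable by measurable
  then show "{\<omega> \<in> space M. V \<omega> \<inter> A \<noteq> {}} \<in> sets M"
    unfolding hit_eq by auto
  have "prob {\<omega> \<in> space M. V \<omega> \<inter> A \<noteq> {}} = 1 - exp (- girg_intensity n D A)"
    unfolding hit_eq using prob_compl[OF no_hit_event] no_hit by simp
  also have "\<dots> \<le> girg_intensity n D A"
    using exp_ge_add_one_self[of "- girg_intensity n D A"] by simp
  finally show "measure M {\<omega> \<in> space M. V \<omega> \<inter> A \<noteq> {}} \<le> girg_intensity n D A" .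
qed

definition heavy_far_points :: "real \<Rightarrow> real \<Rightarrow> real \<Rightarrow> ((real^'d) \<times> real) set" where
  "heavy_far_points e r n =
     {(x, w). x \<in> torus - torus_ball r \<and> (torus_norm x ^ CARD('d) * n) powr (1 / e) \<le> w}"

lemma heavy_far_points_in_sets:
  assumes "sets D = sets borel"
  shows "(heavy_far_points e r n :: ((real^'d) \<times> real) set) \<in> sets (lborel \<Otimes>\<^sub>M D)"
proof -
  have sets_eq: "sets (lborel \<Otimes>\<^sub>M D) = sets (lborel \<Otimes>\<^sub>M (borel :: real measure))"
    using assms by (intro sets_pair_measure_cong) simp_all
  have "(heavy_far_points e r n :: ((real^'d) \<times> real) set) =
      {p \<in> space (lborel \<Otimes>\<^sub>M borel). fst p \<in> torus \<and> \<not> torus_norm (fst p) \<le> r \<and>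
         (torus_norm (fst p) ^ CARD('d) * n) powr (1 / e) \<le> snd p}"
    by (auto simp: heavy_far_points_def torus_ball_def space_pair_measure)
  also have "\<dots> \<in> sets (lborel \<Otimes>\<^sub>M borel)"
    by measurable
  finally show ?thesis
    unfolding sets_eq .
qed

lemma heavy_far_points_subset_dyadic:
  assumes "0 < r" and "0 < e" and "0 \<le> n" and "1/2 \<le> r * 2 ^ N"
  shows "(heavy_far_points e r n :: ((real^'d) \<times> real) set) \<subseteq>
    (\<Union>k<N. torus_ball (r * 2 ^ Suc k) \<times> {((r * 2 ^ k) ^ CARD('d) * n) powr (1 / e)..})"
proof safe
  fix x :: "real^'d" and w
  assume "(x, w) \<in> heavy_far_points e r n"
  then have x: "x \<in> torus" "r < torus_norm x"
    and w: "(torus_norm x ^ CARD('d) * n) powr (1 / e) \<le> w"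
    by (auto simp: heavy_far_points_def torus_ball_def)
  obtain k where "k < N" and k: "r * 2 ^ k < torus_norm x" "torus_norm x \<le> r * 2 ^ Suc k"
    using dyadic_scale_exists[OF x(2), of N] torus_norm_le_half[of x] assms(4) by force
  have "((r * 2 ^ k) ^ CARD('d) * n) powr (1 / e) \<le> (torus_norm x ^ CARD('d) * n) powr (1 / e)"
    using assms k(1) by (intro powr_mono2 mult_right_mono power_mono) auto
  with w \<open>k < N\<close> x(1) k(2) show "(x, w) \<in> (\<Union>k<N. torus_ball (r * 2 ^ Suc k) \<times>
      {((r * 2 ^ k) ^ CARD('d) * n) powr (1 / e)..})"
    by (auto simp: torus_ball_def)
qed

lemma emeasure_torus_ball_times_tail_le:
  fixes D :: "real measure"
  assumes "prob_space D" and "sets D = sets borel" and "0 \<le> R"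
  shows "emeasure (lborel \<Otimes>\<^sub>M D) (torus_ball R \<times> {w..} :: ((real^'d) \<times> real) set)
    \<le> ennreal ((2 * R) ^ CARD('d) * measure D {w..})"
proof -
  interpret D: prob_space D by fact
  have "emeasure (lborel \<Otimes>\<^sub>M D) (torus_ball R \<times> {w..} :: ((real^'d) \<times> real) set)
      = emeasure lborel (torus_ball R :: (real^'d) set) * emeasure D {w..}"
    using assms(2) by (intro D.emeasure_pair_measure_Times) auto
  also have "\<dots> \<le> ennreal ((2 * R) ^ CARD('d)) * ennreal (measure D {w..})"
    using assms(3) by (intro mult_mono emeasure_torus_ball_le) (auto simp: D.emeasure_eq_measure)
  finally show ?thesis
    using assms(3) by (simp add: ennreal_mult)
qed

lemma dyadic_shell_bound_eq:
  fixes r n s :: real and d k :: nat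
  assumes "0 < r" and "0 < n"
  shows "n * ((2 * (r * 2 ^ Suc k)) ^ d * (c * ((r * 2 ^ k) ^ d * n) powr (- s)))
    = 4 ^ d * c * (r ^ d * n) powr (1 - s) * (2 powr (d * (1 - s))) ^ k"
proof -
  define a where "a = r ^ d * n"
  define t :: real where "t = (2 ^ k) ^ d"
  have a: "0 < a" and t: "0 < t"
    using assms by (auto simp: a_def t_def)
  have volume: "(2 * (r * 2 ^ Suc k)) ^ d = 4 ^ d * r ^ d * t"
    by (simp add: t_def power_mult_distrib)
  have tail: "((r * 2 ^ k) ^ d * n) powr (- s) = a powr (- s) * t powr (- s)"
    using a t by (simp add: a_def t_def power_mult_distrib powr_mult mult_ac)
  have scale: "n * r ^ d * a powr (- s) = a powr (1 - s)"
    using a by (simp add: a_def powr_diff powr_minus divide_inverse mult_ac)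
  have ratio: "t * t powr (- s) = (2 powr (d * (1 - s))) ^ k"
  proof -
    have "t = 2 powr (k * d)"
      by (simp add: t_def powr_realpow[symmetric] powr_powr)
    then have "t * t powr (- s) = 2 powr (k * d * (1 - s))"
      by (simp add: powr_powr powr_add[symmetric] algebra_simps)
    also have "\<dots> = (2 powr (d * (1 - s))) ^ k"
      by (simp add: powr_realpow[symmetric] powr_powr mult_ac)
    finally show ?thesis .
  qed
  have "n * ((2 * (r * 2 ^ Suc k)) ^ d * (c * ((r * 2 ^ k) ^ d * n) powr (- s)))
      = 4 ^ d * c * (n * r ^ d * a powr (- s)) * (t * t powr (- s))"
    unfolding volume tail by (simp only: ac_simps)
  also have "\<dots> = 4 ^ d * c * a powr (1 - s) * (2 powr (d * (1 - s))) ^ k"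
    unfolding scale ratio ..
  finally show ?thesis
    unfolding a_def .
qed

lemma emeasure_dyadic_shell_le:
  fixes D :: "real measure" and c p e r n wmin :: real
  assumes D: "prob_space D" "sets D = sets borel"
    and tail: "\<And>w. wmin \<le> w \<Longrightarrow> measure D {w..} \<le> c * w powr (- p)"
    and "0 < e" and "0 < r" and "0 \<le> n" and "0 \<le> c"
    and threshold: "wmin \<le> (r ^ CARD('d) * n) powr (1 / e)"
  shows "emeasure (lborel \<Otimes>\<^sub>M D)
      (torus_ball (r * 2 ^ Suc k) \<times> {((r * 2 ^ k) ^ CARD('d) * n) powr (1 / e)..} :: ((real^'d) \<times> real) set)
    \<le> ennreal ((2 * (r * 2 ^ Suc k)) ^ CARD('d) * (c * ((r * 2 ^ k) ^ CARD('d) * n) powr (- (p / e))))"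
proof -
  define w where "w = ((r * 2 ^ k) ^ CARD('d) * n) powr (1 / e)"
  have "r ^ CARD('d) * n \<le> (r * 2 ^ k) ^ CARD('d) * n"
    using assms by (intro mult_right_mono power_mono) auto
  then have "(r ^ CARD('d) * n) powr (1 / e) \<le> w"
    unfolding w_def using assms by (intro powr_mono2) auto
  with threshold have "measure D {w..} \<le> c * ((r * 2 ^ k) ^ CARD('d) * n) powr (- (p / e))"
    using tail[of w] assms by (simp add: w_def powr_powr)
  moreover have "emeasure (lborel \<Otimes>\<^sub>M D) (torus_ball (r * 2 ^ Suc k) \<times> {w..} :: ((real^'d) \<times> real) set)
      \<le> ennreal ((2 * (r * 2 ^ Suc k)) ^ CARD('d) * measure D {w..})"
    using \<open>0 < r\<close> by (intro emeasure_torus_ball_times_tail_le[OF D]) simp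
  ultimately show ?thesis
    unfolding w_def[symmetric] using \<open>0 < r\<close>
    by (elim order_trans) (intro ennreal_leI mult_left_mono, simp_all)
qed

lemma measure_heavy_far_points_le:
  fixes D :: "real measure" and c p e r n wmin :: real
  assumes D: "prob_space D" "sets D = sets borel"
    and tail: "\<And>w. wmin \<le> w \<Longrightarrow> measure D {w..} \<le> c * w powr (- p)"
    and e: "0 < e" "e < p" and r: "0 < r" and n: "0 < n" and c: "0 \<le> c"
    and threshold: "wmin \<le> (r ^ CARD('d) * n) powr (1 / e)"
  shows "n * measure (lborel \<Otimes>\<^sub>M D) (heavy_far_points e r n :: ((real^'d) \<times> real) set)
    \<le> 4 ^ CARD('d) * c / (1 - 2 powr (CARD('d) * (1 - p / e))) * (r ^ CARD('d) * n) powr (1 - p / e)"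
proof -
  define d where "d = CARD('d)"
  define s where "s = p / e"
  define q :: real where "q = 2 powr (d * (1 - s))"
  define shell_bound where
    "shell_bound k = (2 * (r * 2 ^ Suc k)) ^ d * (c * ((r * 2 ^ k) ^ d * n) powr (- s))" for k
  have "1 < s" and "0 < d"
    using assms by (simp_all add: s_def d_def)
  then have q: "0 \<le> q" "q < 1"
    unfolding q_def by (auto intro!: powr_less_one simp: mult_less_0_iff)
  obtain N where "1 / (2 * r) < 2 ^ N"
    using real_arch_pow[of 2] by auto
  then have N: "1/2 \<le> r * 2 ^ N"
    using \<open>0 < r\<close> by (simp add: field_simps)
  have "measure (lborel \<Otimes>\<^sub>M D) (heavy_far_points e r n :: ((real^'d) \<times> real) set)
      \<le> (\<Sum>k<N. shell_bound k)"
  proof (rule measure_le_sum_of_cover)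
    show "(heavy_far_points e r n :: ((real^'d) \<times> real) set) \<subseteq> (\<Union>k\<in>{..<N}.
        torus_ball (r * 2 ^ Suc k) \<times> {((r * 2 ^ k) ^ CARD('d) * n) powr (1 / e)..})"
      using assms N by (intro heavy_far_points_subset_dyadic) auto
  qed (use emeasure_dyadic_shell_le[where 'd = 'd, OF D tail e(1) r less_imp_le[OF n] c threshold]
       heavy_far_points_in_sets[OF D(2)] assms in \<open>auto simp: shell_bound_def d_def s_def\<close>)
  then have "n * measure (lborel \<Otimes>\<^sub>M D) (heavy_far_points e r n :: ((real^'d) \<times> real) set)
      \<le> (\<Sum>k<N. n * shell_bound k)"
    using \<open>0 < n\<close> by (simp add: sum_distrib_left[symmetric])
  also have "\<dots> = 4 ^ d * c * (r ^ d * n) powr (1 - s) * (\<Sum>k<N. q ^ k)"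
    unfolding sum_distrib_left shell_bound_def q_def using assms by (intro sum.cong refl dyadic_shell_bound_eq)
  also have "\<dots> \<le> 4 ^ d * c * (r ^ d * n) powr (1 - s) * (1 / (1 - q))"
  proof (rule mult_left_mono)
    show "(\<Sum>k<N. q ^ k) \<le> 1 / (1 - q)"
      using q by (simp add: sum_gp_strict divide_right_mono)
  qed (use assms in simp)
  finally show ?thesis
    by (simp add: d_def s_def q_def)
qed

lemma weak_power_law_tail_le:
  assumes "weak_power_law D \<beta> wmin" and "0 < \<gamma>"
  obtains c where "0 \<le> c" and "\<And>w. wmin \<le> w \<Longrightarrow> measure D {w..} \<le> c * w powr (1 - \<beta> + \<gamma>)"
  using assms unfolding weak_power_law_def by (meson order.trans less_imp_le)

definition heavy_far_event ::
  "'a measure \<Rightarrow> ('a \<Rightarrow> ((real^'d) \<times> real) set) \<Rightarrow> real \<Rightarrow> real \<Rightarrow> real \<Rightarrow> 'a set" where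
  "heavy_far_event M V e r n = {\<omega> \<in> space M. V \<omega> \<inter> heavy_far_points e r n \<noteq> {}}"

lemma heavy_far_event_eq:
  fixes V :: "'a \<Rightarrow> ((real^'d) \<times> real) set"
  shows "{\<omega> \<in> space M. \<exists>(x, w) \<in> V \<omega>. x \<in> torus - torus_ball r \<and>
      w \<ge> (torus_norm x ^ CARD('d) * n) powr (1 / e)} = heavy_far_event M V e r n"
  by (auto simp: heavy_far_event_def heavy_far_points_def)

lemma prob_heavy_far_event_le:
  fixes M :: "'a measure" and V :: "'a \<Rightarrow> ((real^'d) \<times> real) set" and D :: "real measure"
  assumes "girg_vertices M V n D" and "prob_space D" and "sets D = sets borel"
    and "\<And>w. wmin \<le> w \<Longrightarrow> measure D {w..} \<le> c * w powr (- p)"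
    and "0 < e" and "e < p" and "0 < r" and "0 < n" and "0 \<le> c"
    and "wmin \<le> (r ^ CARD('d) * n) powr (1 / e)"
  shows "heavy_far_event M V e r n \<in> sets M"
    and "measure M (heavy_far_event M V e r n) \<le> 4 ^ CARD('d) * c / (1 - 2 powr (CARD('d) * (1 - p / e)))
                          * (r ^ CARD('d) * n) powr (1 - p / e)"
proof -
  note meet = girg_vertices_meet_prob_le[OF assms(1) heavy_far_points_in_sets[OF assms(3), of e r n]]
  then show "heavy_far_event M V e r n \<in> sets M"
    unfolding heavy_far_event_def by blast
  have "heavy_far_points e r n \<inter> (torus \<times> UNIV) = (heavy_far_points e r n :: ((real^'d) \<times> real) set)"
    by (auto simp: heavy_far_points_def)
  with meet have "measure M (heavy_far_event M V e r n)
      \<le> n * measure (lborel \<Otimes>\<^sub>M D) (heavy_far_points e r n :: ((real^'d) \<times> real) set)"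
    unfolding heavy_far_event_def girg_intensity_def by simp
  also have "\<dots> \<le> 4 ^ CARD('d) * c / (1 - 2 powr (CARD('d) * (1 - p / e)))
                  * (r ^ CARD('d) * n) powr (1 - p / e)"
    using assms(2-10) by (rule measure_heavy_far_points_le)
  finally show "measure M (heavy_far_event M V e r n) \<le> 4 ^ CARD('d) * c / (1 - 2 powr (CARD('d) * (1 - p / e)))
                  * (r ^ CARD('d) * n) powr (1 - p / e)" .
qed

lemma prob_heavy_far_event_le_powr:
  fixes D :: "real measure"
  assumes "weak_power_law D \<beta> wmin" and "\<beta> < 3" and "0 < \<eta>" and "\<eta> < \<beta> - 1"
  shows "\<exists>K\<ge>0. \<forall>(M :: 'a measure) (V :: 'a \<Rightarrow> ((real^'d) \<times> real) set) n r.
    girg_vertices M V n D \<longrightarrow> 0 < r \<longrightarrow> max 1 (wmin powr (\<beta> - 1 - \<eta>)) \<le> r ^ CARD('d) * n \<longrightarrow>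
    heavy_far_event M V (\<beta> - 1 - \<eta>) r n \<in> sets M \<and>
    measure M (heavy_far_event M V (\<beta> - 1 - \<eta>) r n) \<le> K * (r ^ CARD('d) * n) powr (- \<eta> / 4)"
proof -
  have D: "prob_space D" "sets D = sets borel"
    using assms(1) by (simp_all add: weak_power_law_def)
  define e where "e = \<beta> - 1 - \<eta>"
  define p where "p = e + \<eta> / 2"
  have e: "0 < e" "e < 2" "e < p"
    using assms(2-4) by (auto simp: e_def p_def)
  have "1 - p / e = - (\<eta> / 2) / e"
    using e by (simp add: p_def field_simps)
  also have "\<dots> \<le> - \<eta> / 4"
    using e assms(3) by (simp add: field_simps)
  finally have exponent: "1 - p / e \<le> - \<eta> / 4" .
  have "1 - \<beta> + \<eta> / 2 = - p"
    by (simp add: p_def e_def)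
  then obtain c where "0 \<le> c" and tail: "\<And>w. wmin \<le> w \<Longrightarrow> measure D {w..} \<le> c * w powr (- p)"
    using weak_power_law_tail_le[OF assms(1), of "\<eta> / 2"] assms(3) by auto
  define K where "K = 4 ^ CARD('d) * c / (1 - 2 powr (CARD('d) * (1 - p / e)))"
  have "1 < p / e"
    using e by simp
  then have "2 powr (CARD('d) * (1 - p / e)) < 1"
    by (intro powr_less_one) (simp_all add: mult_less_0_iff)
  with \<open>0 \<le> c\<close> have "0 \<le> K"
    by (simp add: K_def)
  moreover have "heavy_far_event M V (\<beta> - 1 - \<eta>) r n \<in> sets M \<and>
      measure M (heavy_far_event M V (\<beta> - 1 - \<eta>) r n) \<le> K * (r ^ CARD('d) * n) powr (- \<eta> / 4)"
    if girg: "girg_vertices M V n D" and "0 < r"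
      and large: "max 1 (wmin powr (\<beta> - 1 - \<eta>)) \<le> r ^ CARD('d) * n"
    for M :: "'a measure" and V :: "'a \<Rightarrow> ((real^'d) \<times> real) set" and n r :: real
  proof -
    define a where "a = r ^ CARD('d) * n"
    have "1 \<le> a" and "wmin powr e \<le> a"
      using large by (simp_all add: a_def e_def)
    then have "0 < n"
      using \<open>0 < r\<close> zero_less_mult_pos[of "r ^ CARD('d)" n] by (simp add: a_def)
    have "wmin \<le> a powr (1 / e)"
      using \<open>wmin powr e \<le> a\<close> e assms powr_mono2[of "1 / e" "wmin powr e" a]
      by (simp add: powr_powr weak_power_law_def)
    note heavy = prob_heavy_far_event_le[OF girg D tail e(1,3) \<open>0 < r\<close> \<open>0 < n\<close> \<open>0 \<le> c\<close>
        \<open>wmin \<le> a powr (1 / e)\<close>[unfolded a_def], folded K_def a_def]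
    have "K * a powr (1 - p / e) \<le> K * a powr (- \<eta> / 4)"
      using \<open>1 \<le> a\<close> exponent \<open>0 \<le> K\<close> by (intro mult_left_mono powr_mono) auto
    with heavy show ?thesis
      unfolding a_def e_def by auto
  qed
  ultimately show ?thesis
    by blast
qed

lemma eventually_no_heavy_far_vertex:
  fixes D :: "real measure"
    and M :: "nat \<Rightarrow> 'a measure" and V :: "nat \<Rightarrow> 'a \<Rightarrow> ((real^'d) \<times> real) set"
  assumes "weak_power_law D \<beta> wmin" and "\<beta> < 3" and "0 < \<eta>" and "\<eta> < \<beta> - 1"
    and "\<And>n. girg_vertices (M n) (V n) (real n) D" and "\<And>n. 0 < r n"
    and "filterlim (\<lambda>n. r n ^ CARD('d) * real n) at_top sequentially"
  shows "\<forall>\<^sub>F n in sequentially.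
           (let Bad = {\<omega> \<in> space (M n). \<exists>(x, w) \<in> V n \<omega>.
                  x \<in> torus - torus_ball (r n) \<and>
                  w \<ge> (torus_norm x ^ CARD('d) * real n) powr (1 / (\<beta> - 1 - \<eta>))}
            in Bad \<in> sets (M n) \<and>
               measure (M n) Bad \<le> (r n ^ CARD('d) * real n) powr (- (1/8) * \<eta>))"
proof -
  obtain K where "0 \<le> K" and bound: "\<forall>(M :: 'a measure) (V :: 'a \<Rightarrow> ((real^'d) \<times> real) set) n r.
    girg_vertices M V n D \<longrightarrow> 0 < r \<longrightarrow> max 1 (wmin powr (\<beta> - 1 - \<eta>)) \<le> r ^ CARD('d) * n \<longrightarrow>
    heavy_far_event M V (\<beta> - 1 - \<eta>) r n \<in> sets M \<and>
    measure M (heavy_far_event M V (\<beta> - 1 - \<eta>) r n) \<le> K * (r ^ CARD('d) * n) powr (- \<eta> / 4)"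
    using prob_heavy_far_event_le_powr[OF assms(1-4)] by blast
  have "\<forall>\<^sub>F x in at_top. max 1 (wmin powr (\<beta> - 1 - \<eta>)) \<le> x \<and> K * x powr (- \<eta> / 4) \<le> x powr (- \<eta> / 8)"
    using assms(3) by (intro eventually_conj eventually_ge_at_top) real_asymp
  from eventually_compose_filterlim[OF this assms(7)] show ?thesis
  proof eventually_elim
    case (elim n)
    with bound[rule_format, OF assms(5,6)] show ?case
      unfolding Let_def heavy_far_event_eq by (auto intro: order_trans)
  qed
qed

theorem lemma5p4:
  fixes \<beta> wmin :: real and D :: "real measure"
    and M :: "nat \<Rightarrow> 'a measure" and V :: "nat \<Rightarrow> 'a \<Rightarrow> ((real^'d) \<times> real) set"
  assumes "2 < \<beta>" and "\<beta> < 3" and "0 < wmin"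
    and "weak_power_law D \<beta> wmin"
    and "\<And>n. girg_vertices (M n) (V n) (real n) D"
  shows "\<exists>c>0. \<forall>\<eta>. 0 < \<eta> \<and> \<eta> < \<beta> - 1 \<longrightarrow>
           (\<forall>r :: nat \<Rightarrow> real. (\<forall>n. 0 < r n) \<longrightarrow>
              (\<lambda>n. real n * measure lborel (torus_ball (r n) :: (real^'d) set))
                 \<in> \<Theta>(\<lambda>n. r n ^ CARD('d) * real n) \<longrightarrow>
              filterlim (\<lambda>n. real n * measure lborel (torus_ball (r n) :: (real^'d) set))
                 at_top sequentially \<longrightarrow>
              (\<forall>\<^sub>F n in sequentially.
                 (let Bad = {\<omega> \<in> space (M n). \<exists>(x, w) \<in> V n \<omega>.
                        x \<in> torus - torus_ball (r n) \<and>
                        w \<ge> (torus_norm x ^ CARD('d) * real n) powr (1 / (\<beta> - 1 - \<eta>))}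
                  in Bad \<in> sets (M n) \<and>
                     measure (M n) Bad \<le> (r n ^ CARD('d) * real n) powr (- c * \<eta>))))"
proof (intro exI[of _ "1/8"] conjI allI impI, goal_cases)
  case (2 \<eta> r)
  have "filterlim (\<lambda>n. r n ^ CARD('d) * real n) at_top sequentially"
    using filterlim_at_top_of_bigo[OF bigthetaD1[OF 2(3)] 2(4)] 2(2) by (simp add: less_imp_le)
  with 2(1,2) show ?case
    by (intro eventually_no_heavy_far_vertex[OF assms(4,2) _ _ assms(5)]) simp_all
qed simp

end
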